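(* Let $n\ge2$, $H>1$, $\mu>0$. Assume the hyperbolic Delaunay unduloid $\mathcal{D}_H(\mu)$ is not a cylinder, i.e. its profile function $\varphi$ is nonconstant. Normalize $\varphi$ so that $\varphi(0)=\alpha_-(\mu)=\min\varphi$, and let $\tau(\mu)$ be its period. Let $$a(t)=\frac{\varphi'(t)}{\cos\varphi(t)\sqrt{1+\varphi'(t)^2}},$$ regarded as a function on $\mathcal{D}_H(\mu)$. Then: 1. $(\Delta-V)a=0$; 2. $a$ vanishes exactly at the points $t=k\tau(\mu)/2$, $k\in\mathbb{Z}$; 3. $a'$ has exactly two zeros $\zeta_1(\mu),\zeta_2(\mu)$ in $[0,\tau(\mu)]$, and they satisfy $0<\zeta_1(\mu)<\tau(\mu)/2<\zeta_2(\mu)<\tau(\mu)$.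
   Context: Use the upper half-space model $\{(x_1,\dots,x_n,y):y>0\}$ of $\mathbb{H}^{n+1}$. The function $\varphi:\mathbb{R}\to(0,\pi/2)$ solves $$\mu=\frac{(\tan\varphi)^{n-1}}{\cos\varphi\sqrt{1+\varphi'^2}}-H(\tan\varphi)^n.$$ The unduloid $\mathcal{D}_H(\mu)$ is parametrized by $\Phi(t,\omega)=(e^t\sin\varphi(t)\omega,e^t\cos\varphi(t))$; it has constant normalized mean curvature $H$. The function $\varphi$ is $\tau(\mu)$-periodic and symmetric about the points $k\tau(\mu)/2$. $\Delta$ is the non-negative Laplace–Beltrami operator, and $V=\|B\|^2-n$. The function $a$ equals $\langle N,\mathcal{Y}\rangle$, where $N$ is the unit normal and $\mathcal{Y}$ is the Killing field of hyperbolic translation along the axis. *)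

theory Defs
  imports "HOL-Analysis.Analysis"
begin

text \<open>Rotational hypersurface in the upper half-space model of hyperbolic (n+1)-space,
  parametrized by Phi(t,w) = (e^t sin(phi t) w, e^t cos(phi t)), w in S^(n-1).\<close>

definition prof_r :: "(real \<Rightarrow> real) \<Rightarrow> real \<Rightarrow> real" where
  "prof_r \<phi> t = exp t * sin (\<phi> t)"

definition prof_y :: "(real \<Rightarrow> real) \<Rightarrow> real \<Rightarrow> real" where
  "prof_y \<phi> t = exp t * cos (\<phi> t)"

definition prof_speed :: "(real \<Rightarrow> real) \<Rightarrow> real \<Rightarrow> real" where
  "prof_speed \<phi> t = sqrt ((deriv (prof_r \<phi>) t)\<^sup>2 + (deriv (prof_y \<phi>) t)\<^sup>2)"

text \<open>Induced hyperbolic metric: g = A(t)^2 dt^2 + B(t)^2 g_{S^(n-1)}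
  (hyperbolic metric = Euclidean metric divided by y^2).\<close>
definition metA :: "(real \<Rightarrow> real) \<Rightarrow> real \<Rightarrow> real" where
  "metA \<phi> t = prof_speed \<phi> t / prof_y \<phi> t"

definition metB :: "(real \<Rightarrow> real) \<Rightarrow> real \<Rightarrow> real" where
  "metB \<phi> t = prof_r \<phi> t / prof_y \<phi> t"

text \<open>Non-negative Laplace--Beltrami operator of the metric A^2 dt^2 + B^2 g_{S^(n-1)}
  applied to a function f depending only on t.\<close>
definition lap_rot :: "nat \<Rightarrow> (real \<Rightarrow> real) \<Rightarrow> (real \<Rightarrow> real) \<Rightarrow> real \<Rightarrow> real" where
  "lap_rot n \<phi> f t =
     - (1 / (metA \<phi> t * metB \<phi> t ^ (n - 1))) *
       deriv (\<lambda>s. metB \<phi> s ^ (n - 1) / metA \<phi> s * deriv f s) t"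

definition nrm_r :: "(real \<Rightarrow> real) \<Rightarrow> real \<Rightarrow> real" where
  "nrm_r \<phi> t = deriv (prof_y \<phi>) t / prof_speed \<phi> t"

definition nrm_y :: "(real \<Rightarrow> real) \<Rightarrow> real \<Rightarrow> real" where
  "nrm_y \<phi> t = - deriv (prof_r \<phi>) t / prof_speed \<phi> t"

text \<open>Euclidean principal curvatures of the rotation hypersurface w.r.t. that normal:
  meridian curvature (multiplicity 1) and parallel curvature (multiplicity n-1).\<close>
definition eucl_kappa_m :: "(real \<Rightarrow> real) \<Rightarrow> real \<Rightarrow> real" where
  "eucl_kappa_m \<phi> t =
     (deriv (prof_r \<phi>) t * deriv (deriv (prof_y \<phi>)) t
      - deriv (prof_y \<phi>) t * deriv (deriv (prof_r \<phi>)) t) / prof_speed \<phi> t ^ 3"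

definition eucl_kappa_p :: "(real \<Rightarrow> real) \<Rightarrow> real \<Rightarrow> real" where
  "eucl_kappa_p \<phi> t = nrm_r \<phi> t / prof_r \<phi> t"

text \<open>Hyperbolic principal curvatures (conformal change g = y^(-2) g_E):
  kappa_hyp = y * kappa_eucl - N_y.\<close>
definition hyp_kappa_m :: "(real \<Rightarrow> real) \<Rightarrow> real \<Rightarrow> real" where
  "hyp_kappa_m \<phi> t = prof_y \<phi> t * eucl_kappa_m \<phi> t - nrm_y \<phi> t"

definition hyp_kappa_p :: "(real \<Rightarrow> real) \<Rightarrow> real \<Rightarrow> real" where
  "hyp_kappa_p \<phi> t = prof_y \<phi> t * eucl_kappa_p \<phi> t - nrm_y \<phi> t"

definition sff_sq :: "nat \<Rightarrow> (real \<Rightarrow> real) \<Rightarrow> real \<Rightarrow> real" where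
  "sff_sq n \<phi> t = (hyp_kappa_m \<phi> t)\<^sup>2 + real (n - 1) * (hyp_kappa_p \<phi> t)\<^sup>2"

definition potV :: "nat \<Rightarrow> (real \<Rightarrow> real) \<Rightarrow> real \<Rightarrow> real" where
  "potV n \<phi> t = sff_sq n \<phi> t - real n"

end

theory Submission
  imports Defs "HOL-Library.Periodic_Fun"
begin

(* Write T = tan phi and W(y) = mu / y^(n-1) + H y.  The ODE for phi says precisely
   1 / (cos phi * sqrt (1 + phi'^2)) = W(T), so a = phi' W(T) and T' = F(T) a with
   F(y) = (1 + y^2) / W(y).  Differentiating the first integral a^2 = 1 + T^2 - W(T)^2 gives
   a (a' - K(T)) = 0 with K(y) = (1 + y^2)(y - W W') / W; since phi is not constant, a' = K(T)
   everywhere, for otherwise T would be constant on a nonempty clopen set.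

   The pair (T, a) therefore solves an autonomous planar system with unique solutions
   (Gronwall), hence is symmetric about every zero of a; together with the minimality of the
   period this puts the zeros of a exactly at the points k tau / 2.  Since y - W W' = y q(y) with
   q strictly decreasing, a' vanishes exactly where T takes one particular value, which happens
   once in each half period because phi is injective there.

   Finally the induced metric is F(T)^2 dt^2 + T^2 g_S and the principal curvatures are W'(T)
   and W(T) / T, so (Delta - V) a = 0 reduces to the Euler equation
   (n - 1) W = (n - 1) y W' + y^2 W''. *)

section \<open>Uniqueness for an autonomous planar system\<close>

lemma gronwall_vanishing_forward:
  fixes E E' :: "real \<Rightarrow> real"
  assumes deriv: "\<And>t. (E has_real_derivative E' t) (at t)"
    and bound: "\<And>t. \<bar>E' t\<bar> \<le> M * E t" and nonneg: "\<And>t. E t \<ge> 0"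
    and zero: "E t0 = 0" and "t0 \<le> t"
  shows "E t = 0"
proof -
  define G where "G s = E s * exp (- M * s)" for s
  have "G t \<le> G t0"
  proof (rule DERIV_nonpos_imp_nonincreasing[OF \<open>t0 \<le> t\<close>])
    fix x
    have "(G has_real_derivative (E' x - M * E x) * exp (- M * x)) (at x)"
      unfolding G_def[abs_def]
      by (auto intro!: derivative_eq_intros deriv simp: algebra_simps)
    moreover have "(E' x - M * E x) * exp (- M * x) \<le> 0"
      using bound[of x] by (simp add: mult_nonpos_nonneg)
    ultimately show "\<exists>y. DERIV G x :> y \<and> y \<le> 0" by blast
  qed
  then have "E t \<le> 0" using zero by (simp add: G_def mult_le_0_iff)
  then show ?thesis using nonneg[of t] by linarith
qed

lemma gronwall_vanishing:
  fixes E E' :: "real \<Rightarrow> real"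
  assumes deriv: "\<And>t. (E has_real_derivative E' t) (at t)"
    and bound: "\<And>t. \<bar>E' t\<bar> \<le> M * E t" and nonneg: "\<And>t. E t \<ge> 0" and zero: "E t0 = 0"
  shows "E t = 0"
proof (cases "t0 \<le> t")
  case True
  then show ?thesis by (rule gronwall_vanishing_forward[OF assms])
next
  case False
  have "((\<lambda>s. E (- s)) has_real_derivative - E' (- s)) (at s)" for s
    using DERIV_chain2[OF deriv DERIV_minus[OF DERIV_ident]] by simp
  then have "E (- (- t)) = 0"
    using gronwall_vanishing_forward[of "\<lambda>s. E (- s)" "\<lambda>s. - E' (- s)" M "- t0" "- t"]
      bound nonneg zero False by auto
  then show ?thesis by simp
qed

lemma lipschitz_on_interval_if_continuous_deriv:
  fixes g g' :: "real \<Rightarrow> real"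
  assumes deriv: "\<And>x. x \<in> {c..d} \<Longrightarrow> (g has_real_derivative g' x) (at x)"
    and cont: "continuous_on {c..d} g'"
  shows "\<exists>L. L-lipschitz_on {c..d} g"
proof -
  have "bounded (g' ` {c..d})"
    using compact_continuous_image[OF cont] by (auto intro: compact_imp_bounded)
  then obtain B where B: "B > 0" "\<And>x. x \<in> {c..d} \<Longrightarrow> \<bar>g' x\<bar> \<le> B"
    by (auto simp: bounded_pos)
  have "B-lipschitz_on {c..d} g"
  proof (rule lipschitz_onI)
    fix x y assume "x \<in> {c..d}" "y \<in> {c..d}"
    then show "dist (g x) (g y) \<le> B * dist x y"
      using field_differentiable_bound[of "{c..d}" g g' B x y] deriv B(2)
      by (auto simp: dist_real_def intro: has_field_derivative_at_within)
  qed (use B in simp)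
  then show ?thesis ..
qed

lemma ode_energy_derivative_bound:
  fixes X Y u v fx fy kx ky B C Lf Lk :: real
  assumes fx: "\<bar>fx\<bar> \<le> B" and fxy: "\<bar>fx - fy\<bar> \<le> Lf * \<bar>X\<bar>"
    and kxy: "\<bar>kx - ky\<bar> \<le> Lk * \<bar>X\<bar>" and v: "\<bar>v\<bar> \<le> C"
    and Lf: "Lf \<ge> 0" and Lk: "Lk \<ge> 0" and Y: "Y = u - v"
  shows "\<bar>2 * X * (fx * u - fy * v) + 2 * Y * (kx - ky)\<bar> \<le> (B + Lk + 2 * C * Lf) * (X\<^sup>2 + Y\<^sup>2)"
proof -
  have "fx * u - fy * v = fx * Y + (fx - fy) * v"
    by (simp add: Y algebra_simps)
  then have "\<bar>2 * X * (fx * u - fy * v) + 2 * Y * (kx - ky)\<bar>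
      \<le> 2 * \<bar>X\<bar> * (\<bar>fx\<bar> * \<bar>Y\<bar> + \<bar>fx - fy\<bar> * \<bar>v\<bar>) + 2 * \<bar>Y\<bar> * \<bar>kx - ky\<bar>"
    by (simp add: abs_mult abs_triangle_ineq order_trans[OF abs_triangle_ineq]
        add_mono mult_left_mono)
  also have "\<dots> \<le> 2 * \<bar>X\<bar> * (B * \<bar>Y\<bar> + Lf * \<bar>X\<bar> * C) + 2 * \<bar>Y\<bar> * (Lk * \<bar>X\<bar>)"
  proof -
    have "\<bar>fx\<bar> * \<bar>Y\<bar> \<le> B * \<bar>Y\<bar>"
      using fx by (rule mult_right_mono) simp
    moreover have "\<bar>fx - fy\<bar> * \<bar>v\<bar> \<le> Lf * \<bar>X\<bar> * C"
      using fxy v Lf by (intro mult_mono) auto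
    ultimately have "2 * \<bar>X\<bar> * (\<bar>fx\<bar> * \<bar>Y\<bar> + \<bar>fx - fy\<bar> * \<bar>v\<bar>)
        \<le> 2 * \<bar>X\<bar> * (B * \<bar>Y\<bar> + Lf * \<bar>X\<bar> * C)"
      by (simp add: add_mono mult_left_mono)
    moreover have "2 * \<bar>Y\<bar> * \<bar>kx - ky\<bar> \<le> 2 * \<bar>Y\<bar> * (Lk * \<bar>X\<bar>)"
      using kxy by (simp add: mult_left_mono)
    ultimately show ?thesis by (rule add_mono)
  qed
  also have "\<dots> = (B + Lk) * (2 * \<bar>X\<bar> * \<bar>Y\<bar>) + 2 * C * Lf * \<bar>X\<bar>\<^sup>2"
    by (simp add: algebra_simps power2_eq_square)
  also have "\<dots> \<le> (B + Lk + 2 * C * Lf) * (\<bar>X\<bar>\<^sup>2 + \<bar>Y\<bar>\<^sup>2)"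
  proof -
    have "B + Lk \<ge> 0" using fx Lk by linarith
    then have 1: "(B + Lk) * (2 * \<bar>X\<bar> * \<bar>Y\<bar>) \<le> (B + Lk) * (\<bar>X\<bar>\<^sup>2 + \<bar>Y\<bar>\<^sup>2)"
      using sum_squares_bound[of "\<bar>X\<bar>" "\<bar>Y\<bar>"] by (simp add: mult_left_mono)
    have "2 * C * Lf \<ge> 0" using v Lf by simp
    then have 2: "2 * C * Lf * \<bar>X\<bar>\<^sup>2 \<le> 2 * C * Lf * (\<bar>X\<bar>\<^sup>2 + \<bar>Y\<bar>\<^sup>2)"
      by (simp add: mult_left_mono)
    show ?thesis using add_mono[OF 1 2] by (simp add: algebra_simps)
  qed
  finally show ?thesis by simp
qed

lemma ode_system_unique:
  fixes f k x u y v :: "real \<Rightarrow> real"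
  assumes dx: "\<And>t. (x has_real_derivative f (x t) * u t) (at t)"
    and du: "\<And>t. (u has_real_derivative k (x t)) (at t)"
    and dy: "\<And>t. (y has_real_derivative f (y t) * v t) (at t)"
    and dv: "\<And>t. (v has_real_derivative k (y t)) (at t)"
    and x_in: "\<And>t. x t \<in> S" and y_in: "\<And>t. y t \<in> S"
    and f_lip: "Lf-lipschitz_on S f" and k_lip: "Lk-lipschitz_on S k"
    and f_bound: "\<And>z. z \<in> S \<Longrightarrow> \<bar>f z\<bar> \<le> B" and v_bound: "\<And>t. \<bar>v t\<bar> \<le> C"
    and init: "x t0 = y t0" "u t0 = v t0"
  shows "x t = y t \<and> u t = v t"
proof -
  define E where "E s = (x s - y s)\<^sup>2 + (u s - v s)\<^sup>2" for s
  define E' where "E' s = 2 * (x s - y s) * (f (x s) * u s - f (y s) * v s)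
      + 2 * (u s - v s) * (k (x s) - k (y s))" for s
  have dE: "(E has_real_derivative E' s) (at s)" for s
    unfolding E_def[abs_def] E'_def
    by (rule derivative_eq_intros dx du dy dv refl)+ (simp add: algebra_simps)
  have bound: "\<bar>E' s\<bar> \<le> (B + Lk + 2 * C * Lf) * E s" for s
  proof -
    have "\<bar>f (x s) - f (y s)\<bar> \<le> Lf * \<bar>x s - y s\<bar>"
      using lipschitz_onD[OF f_lip x_in y_in] by (simp add: dist_real_def)
    moreover have "\<bar>k (x s) - k (y s)\<bar> \<le> Lk * \<bar>x s - y s\<bar>"
      using lipschitz_onD[OF k_lip x_in y_in] by (simp add: dist_real_def)
    ultimately show ?thesis
      unfolding E_def E'_def
      using f_bound[OF x_in] v_bound lipschitz_on_nonneg[OF f_lip] lipschitz_on_nonneg[OF k_lip]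
      by (intro ode_energy_derivative_bound) auto
  qed
  have "E t = 0"
    using gronwall_vanishing[OF dE bound, of t0 t] by (simp add: E_def init)
  then show ?thesis
    by (simp add: E_def add_nonneg_eq_0_iff)
qed

section \<open>Periodic functions of a real variable\<close>

lemma deriv_shift_periodic:
  assumes "\<And>t. g (t + p) = g t"
  shows "deriv g (t + p) = deriv g t"
proof -
  have "deriv g (t + p) = deriv (\<lambda>s. g (s + p)) t"
    unfolding deriv_def DERIV_shift ..
  also have "(\<lambda>s. g (s + p)) = g" using assms by auto
  finally show ?thesis .
qed

lemma exists_int_shift_into_period:
  fixes \<tau> t :: real
  assumes "\<tau> > 0"
  obtains k :: int where "t - of_int k * \<tau> \<in> {0..<\<tau>}"
proof
  have "of_int \<lfloor>t / \<tau>\<rfloor> * \<tau> \<le> t"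
    using of_int_floor_le[of "t / \<tau>"] by (simp only: pos_le_divide_eq[OF assms])
  moreover have "t < (of_int \<lfloor>t / \<tau>\<rfloor> + 1) * \<tau>"
    using real_of_int_floor_add_one_gt[of "t / \<tau>"] by (simp only: pos_divide_less_eq[OF assms])
  ultimately show "t - of_int \<lfloor>t / \<tau>\<rfloor> * \<tau> \<in> {0..<\<tau>}"
    by (simp add: algebra_simps)
qed

lemma bounded_range_if_continuous_periodic:
  fixes g :: "real \<Rightarrow> 'a::metric_space"
  assumes cont: "\<And>t. isCont g t" and "\<tau> > 0" and periodic: "\<And>t. g (t + \<tau>) = g t"
  shows "bounded (range g)"
proof -
  interpret periodic_fun_simple g \<tau> by unfold_locales (rule periodic)
  have "range g \<subseteq> g ` {0..\<tau>}"
  proof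
    fix y assume "y \<in> range g"
    then obtain t where t: "y = g t" by blast
    obtain k :: int where "t - of_int k * \<tau> \<in> {0..<\<tau>}"
      using exists_int_shift_into_period[OF \<open>\<tau> > 0\<close>] .
    moreover have "g t = g (t - of_int k * \<tau>)"
      using plus_of_int[of "t - of_int k * \<tau>" k] by simp
    ultimately show "y \<in> g ` {0..\<tau>}" using t by auto
  qed
  moreover have "compact (g ` {0..\<tau>})"
    using cont by (intro compact_continuous_image continuous_at_imp_continuous_on) auto
  ultimately show ?thesis by (meson bounded_subset compact_imp_bounded)
qed

lemma period_multiple_of_minimal_period:
  fixes g :: "real \<Rightarrow> 'a"
  assumes "\<tau> > 0" and periodic: "\<And>t. g (t + \<tau>) = g t"
    and minimal: "\<And>P. 0 < P \<Longrightarrow> P < \<tau> \<Longrightarrow> \<exists>t. g (t + P) \<noteq> g t"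
    and period: "\<And>t. g (t + P) = g t"
  shows "\<exists>k::int. P = of_int k * \<tau>"
proof -
  interpret periodic_fun_simple g \<tau> by unfold_locales (rule periodic)
  obtain k :: int where r: "P - of_int k * \<tau> \<in> {0..<\<tau>}"
    using exists_int_shift_into_period[OF \<open>\<tau> > 0\<close>] .
  have "g (t + (P - of_int k * \<tau>)) = g t" for t
    using plus_of_int[of "t + (P - of_int k * \<tau>)" k] period[of t] by (simp add: algebra_simps)
  then have "P - of_int k * \<tau> = 0"
    using minimal[of "P - of_int k * \<tau>"] r by force
  then show ?thesis by auto
qed

section \<open>Curvatures of a rotation hypersurface\<close>

context
  fixes \<phi> :: "real \<Rightarrow> real"
  assumes differentiable_phi: "\<And>t. \<phi> differentiable (at t)"
    and differentiable_phi': "\<And>t. deriv \<phi> differentiable (at t)"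
begin

private lemma DERIV_phi: "(\<phi> has_real_derivative deriv \<phi> t) (at t)"
  using differentiable_phi by (simp add: DERIV_deriv_iff_real_differentiable)

private lemma DERIV_phi': "(deriv \<phi> has_real_derivative deriv (deriv \<phi>) t) (at t)"
  using differentiable_phi' by (simp add: DERIV_deriv_iff_real_differentiable)

lemma deriv_prof_r: "deriv (prof_r \<phi>) = (\<lambda>t. exp t * (sin (\<phi> t) + cos (\<phi> t) * deriv \<phi> t))"
proof
  fix t
  have "(prof_r \<phi> has_real_derivative exp t * (sin (\<phi> t) + cos (\<phi> t) * deriv \<phi> t)) (at t)"
    unfolding prof_r_def[abs_def]
    by (rule derivative_eq_intros DERIV_phi refl)+ (simp add: algebra_simps)
  then show "deriv (prof_r \<phi>) t = exp t * (sin (\<phi> t) + cos (\<phi> t) * deriv \<phi> t)"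
    by (rule DERIV_imp_deriv)
qed

lemma deriv_prof_y: "deriv (prof_y \<phi>) = (\<lambda>t. exp t * (cos (\<phi> t) - sin (\<phi> t) * deriv \<phi> t))"
proof
  fix t
  have "(prof_y \<phi> has_real_derivative exp t * (cos (\<phi> t) - sin (\<phi> t) * deriv \<phi> t)) (at t)"
    unfolding prof_y_def[abs_def]
    by (rule derivative_eq_intros DERIV_phi refl)+ (simp add: algebra_simps)
  then show "deriv (prof_y \<phi>) t = exp t * (cos (\<phi> t) - sin (\<phi> t) * deriv \<phi> t)"
    by (rule DERIV_imp_deriv)
qed

lemma deriv2_prof_r: "deriv (deriv (prof_r \<phi>)) t = exp t * (sin (\<phi> t) + 2 * cos (\<phi> t) * deriv \<phi> t
    - sin (\<phi> t) * (deriv \<phi> t)\<^sup>2 + cos (\<phi> t) * deriv (deriv \<phi>) t)"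
proof -
  have "(deriv (prof_r \<phi>) has_real_derivative exp t * (sin (\<phi> t) + 2 * cos (\<phi> t) * deriv \<phi> t
      - sin (\<phi> t) * (deriv \<phi> t)\<^sup>2 + cos (\<phi> t) * deriv (deriv \<phi>) t)) (at t)"
    unfolding deriv_prof_r
    by (rule derivative_eq_intros DERIV_phi DERIV_phi' refl)+
      (simp add: algebra_simps power2_eq_square)
  then show ?thesis by (rule DERIV_imp_deriv)
qed

lemma deriv2_prof_y: "deriv (deriv (prof_y \<phi>)) t = exp t * (cos (\<phi> t) - 2 * sin (\<phi> t) * deriv \<phi> t
    - cos (\<phi> t) * (deriv \<phi> t)\<^sup>2 - sin (\<phi> t) * deriv (deriv \<phi>) t)"
proof -
  have "(deriv (prof_y \<phi>) has_real_derivative exp t * (cos (\<phi> t) - 2 * sin (\<phi> t) * deriv \<phi> t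
      - cos (\<phi> t) * (deriv \<phi> t)\<^sup>2 - sin (\<phi> t) * deriv (deriv \<phi>) t)) (at t)"
    unfolding deriv_prof_y
    by (rule derivative_eq_intros DERIV_phi DERIV_phi' refl)+
      (simp add: algebra_simps power2_eq_square)
  then show ?thesis by (rule DERIV_imp_deriv)
qed

lemma prof_speed_eq: "prof_speed \<phi> t = exp t * sqrt (1 + (deriv \<phi> t)\<^sup>2)"
proof -
  have "(deriv (prof_r \<phi>) t)\<^sup>2 + (deriv (prof_y \<phi>) t)\<^sup>2
      = (exp t)\<^sup>2 * ((sin (\<phi> t))\<^sup>2 + (cos (\<phi> t))\<^sup>2) * (1 + (deriv \<phi> t)\<^sup>2)"
    unfolding deriv_prof_r deriv_prof_y by (simp only: power2_eq_square algebra_simps)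
  then show ?thesis unfolding prof_speed_def by (simp add: real_sqrt_mult)
qed

lemma metA_eq: "metA \<phi> t = sqrt (1 + (deriv \<phi> t)\<^sup>2) / cos (\<phi> t)"
  unfolding metA_def prof_speed_eq prof_y_def by simp

lemma hyp_kappa_p_eq:
  assumes "sin (\<phi> t) \<noteq> 0"
  shows "hyp_kappa_p \<phi> t = 1 / (sin (\<phi> t) * sqrt (1 + (deriv \<phi> t)\<^sup>2))"
proof -
  define c s p where "c = cos (\<phi> t)" and "s = sin (\<phi> t)" and "p = deriv \<phi> t"
  define \<sigma> where "\<sigma> = sqrt (1 + p\<^sup>2)"
  have "\<sigma> > 0" unfolding \<sigma>_def by (simp add: add_pos_nonneg)
  have "hyp_kappa_p \<phi> t = exp t * c * (exp t * (c - s * p) / (exp t * \<sigma>)) / (exp t * s)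
      + exp t * (s + c * p) / (exp t * \<sigma>)"
    unfolding hyp_kappa_p_def eucl_kappa_p_def nrm_r_def nrm_y_def prof_speed_eq deriv_prof_r
      deriv_prof_y prof_y_def prof_r_def
    by (simp add: c_def s_def p_def \<sigma>_def)
  also have "\<dots> = (c * (c - s * p) + s * (s + c * p)) / (s * \<sigma>)"
    using assms \<open>\<sigma> > 0\<close> by (simp add: s_def field_simps)
  also have "c * (c - s * p) + s * (s + c * p) = 1"
    by (simp add: c_def s_def algebra_simps flip: power2_eq_square)
  finally show ?thesis by (simp add: s_def p_def \<sigma>_def)
qed

lemma hyp_kappa_m_eq:
  "hyp_kappa_m \<phi> t = (sin (\<phi> t) * (1 + (deriv \<phi> t)\<^sup>2) - cos (\<phi> t) * deriv (deriv \<phi>) t)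
    / sqrt (1 + (deriv \<phi> t)\<^sup>2) ^ 3"
proof -
  define c s p q e where "c = cos (\<phi> t)" and "s = sin (\<phi> t)" and "p = deriv \<phi> t"
    and "q = deriv (deriv \<phi>) t" and "e = exp t"
  define \<sigma> where "\<sigma> = sqrt (1 + p\<^sup>2)"
  have \<sigma>: "\<sigma> > 0" "\<sigma>\<^sup>2 = 1 + p\<^sup>2" unfolding \<sigma>_def by (simp_all add: add_pos_nonneg)
  have sc: "s\<^sup>2 + c\<^sup>2 = 1" by (simp add: s_def c_def)
  have "e * (s + c * p) * (e * (c - 2 * s * p - c * p\<^sup>2 - s * q))
      - e * (c - s * p) * (e * (s + 2 * c * p - s * p\<^sup>2 + c * q))
      = - e\<^sup>2 * (s\<^sup>2 + c\<^sup>2) * (p + p ^ 3 + q)"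
    unfolding power2_eq_square power3_eq_cube by algebra
  then have "hyp_kappa_m \<phi> t
      = e * c * (- e\<^sup>2 * (p + p ^ 3 + q) / (e * \<sigma>) ^ 3) + e * (s + c * p) / (e * \<sigma>)"
    unfolding hyp_kappa_m_def eucl_kappa_m_def deriv2_prof_r deriv2_prof_y
    unfolding nrm_y_def prof_speed_eq deriv_prof_r deriv_prof_y prof_y_def
    by (simp add: c_def s_def p_def q_def e_def \<sigma>_def sc)
  also have "\<dots> = (- c * (p + p ^ 3 + q) + (s + c * p) * \<sigma>\<^sup>2) / \<sigma> ^ 3"
    using \<sigma>(1) by (simp add: e_def field_simps power2_eq_square power3_eq_cube)
  also have "\<dots> = (s * \<sigma>\<^sup>2 - c * q) / \<sigma> ^ 3"
    unfolding \<sigma>(2) by (simp add: algebra_simps power2_eq_square power3_eq_cube)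
  finally have "hyp_kappa_m \<phi> t = (s * (1 + p\<^sup>2) - c * q) / \<sigma> ^ 3"
    unfolding \<sigma>(2) .
  then show ?thesis by (simp only: s_def c_def p_def q_def \<sigma>_def)
qed

end

section \<open>The functions of the profile variable \<open>tan \<phi>\<close>\<close>

locale delaunay_profile =
  fixes n :: nat and \<mu> H :: real
  assumes n_ge_2: "n \<ge> 2" and mu_pos: "\<mu> > 0" and H_pos: "H > 0"
begin

definition W :: "real \<Rightarrow> real" where
  "W y = \<mu> / y ^ (n - 1) + H * y"

definition W' :: "real \<Rightarrow> real" where
  "W' y = H - real (n - 1) * \<mu> / y ^ n"

definition W'' :: "real \<Rightarrow> real" where
  "W'' y = real (n - 1) * real n * \<mu> / y ^ (n + 1)"

definition Q :: "real \<Rightarrow> real" where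
  "Q y = y - W y * W' y"

definition q :: "real \<Rightarrow> real" where
  "q y = (1 - H\<^sup>2) + real (n - 1) * \<mu>\<^sup>2 / y ^ (2 * n) + real (n - 2) * \<mu> * H / y ^ n"

definition F :: "real \<Rightarrow> real" where
  "F y = (1 + y\<^sup>2) / W y"

definition K :: "real \<Rightarrow> real" where
  "K y = (1 + y\<^sup>2) * Q y / W y"

lemma n_Suc_Suc: obtains j where "n = Suc (Suc j)"
  using n_ge_2 by (metis add_2_eq_Suc le_iff_add)

lemma W_pos: "y > 0 \<Longrightarrow> W y > 0"
  unfolding W_def using mu_pos H_pos by (intro add_pos_pos divide_pos_pos) auto

lemma W_nonzero: "y > 0 \<Longrightarrow> W y \<noteq> 0"
  using W_pos by force

lemma DERIV_W: "y > 0 \<Longrightarrow> (W has_real_derivative W' y) (at y)"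
proof -
  assume y: "y > 0"
  obtain j where j: "n = Suc (Suc j)" by (rule n_Suc_Suc)
  have "((\<lambda>y. \<mu> / y ^ (n - 1) + H * y) has_real_derivative
      - (\<mu> * (real (n - 1) * y ^ (n - 1 - 1))) / (y ^ (n - 1) * y ^ (n - 1)) + H) (at y)"
    using y by (auto intro!: derivative_eq_intros)
  moreover have "- (\<mu> * (real (n - 1) * y ^ (n - 1 - 1))) / (y ^ (n - 1) * y ^ (n - 1)) + H = W' y"
    using y unfolding W'_def unfolding j by (simp add: field_simps)
  ultimately show ?thesis unfolding W_def[abs_def] by simp
qed

lemma DERIV_W': "y > 0 \<Longrightarrow> (W' has_real_derivative W'' y) (at y)"
proof -
  assume y: "y > 0"
  obtain j where j: "n = Suc (Suc j)" by (rule n_Suc_Suc)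
  have "((\<lambda>y. H - real (n - 1) * \<mu> / y ^ n) has_real_derivative
      - (- (real (n - 1) * \<mu> * (real n * y ^ (n - 1))) / (y ^ n * y ^ n))) (at y)"
    using y by (auto intro!: derivative_eq_intros)
  moreover have "- (- (real (n - 1) * \<mu> * (real n * y ^ (n - 1))) / (y ^ n * y ^ n)) = W'' y"
    using y unfolding W''_def unfolding j by (simp add: field_simps)
  ultimately show ?thesis unfolding W'_def[abs_def] by simp
qed

lemma DERIV_Q: "y > 0 \<Longrightarrow> (Q has_real_derivative 1 - (W' y)\<^sup>2 - W y * W'' y) (at y)"
  unfolding Q_def[abs_def]
  by (auto intro!: derivative_eq_intros DERIV_W DERIV_W' simp: power2_eq_square)

lemma isCont_W: "y > 0 \<Longrightarrow> isCont W y"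
  using DERIV_W DERIV_isCont by blast

lemma isCont_W': "y > 0 \<Longrightarrow> isCont W' y"
  using DERIV_W' DERIV_isCont by blast

lemma isCont_W'': "y > 0 \<Longrightarrow> isCont W'' y"
  unfolding W''_def by (intro continuous_intros) auto

lemma isCont_Q: "y > 0 \<Longrightarrow> isCont Q y"
  using DERIV_Q DERIV_isCont by blast

lemma isCont_K: "y > 0 \<Longrightarrow> isCont K y"
  unfolding K_def[abs_def]
  by (intro continuous_intros isCont_Q isCont_W) (auto dest: W_pos)

text \<open>The Euler equation satisfied by both \<open>y\<close> and \<open>y ^ (1 - n)\<close>, hence by \<open>W\<close>.\<close>
lemma W_ode: "y > 0 \<Longrightarrow> real (n - 1) * W y = real (n - 1) * y * W' y + y\<^sup>2 * W'' y"
proof -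
  assume y: "y > 0"
  obtain j where j: "n = Suc (Suc j)" by (rule n_Suc_Suc)
  show ?thesis using y unfolding W_def W'_def W''_def unfolding j
    by (simp add: field_simps power2_eq_square)
qed

lemma Q_eq: "y > 0 \<Longrightarrow> Q y = y * q y"
proof -
  assume y: "y > 0"
  have pn: "y ^ n = y ^ (n - 1) * y"
    using n_ge_2 by (simp add: power_Suc2[symmetric])
  have p2n: "y ^ (2 * n) = (y ^ (n - 1) * y)\<^sup>2"
    by (simp add: power_even_eq pn)
  have r: "real (n - 2) = real (n - 1) - 1"
    using n_ge_2 by simp
  show ?thesis using y unfolding Q_def W_def W'_def q_def p2n pn r
    by (simp add: field_simps power2_eq_square)
qed

lemma q_strict_antimono: "0 < y1 \<Longrightarrow> y1 < y2 \<Longrightarrow> q y2 < q y1"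
proof -
  assume y: "0 < y1" "y1 < y2"
  have "\<mu>\<^sup>2 / y2 ^ (2 * n) < \<mu>\<^sup>2 / y1 ^ (2 * n)"
    using y mu_pos n_ge_2 by (intro divide_strict_left_mono power_strict_mono mult_pos_pos) auto
  moreover have "real (n - 1) > 0" using n_ge_2 by simp
  ultimately have "real (n - 1) * \<mu>\<^sup>2 / y2 ^ (2 * n) < real (n - 1) * \<mu>\<^sup>2 / y1 ^ (2 * n)"
    by (metis mult_strict_left_mono times_divide_eq_right)
  moreover have "\<mu> * H / y2 ^ n \<le> \<mu> * H / y1 ^ n"
    using y mu_pos H_pos by (intro divide_left_mono power_mono mult_pos_pos) auto
  then have "real (n - 2) * \<mu> * H / y2 ^ n \<le> real (n - 2) * \<mu> * H / y1 ^ n"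
    by (metis mult_left_mono of_nat_0_le_iff times_divide_eq_right mult.assoc)
  ultimately show ?thesis unfolding q_def by linarith
qed

lemma q_inj: "y1 > 0 \<Longrightarrow> y2 > 0 \<Longrightarrow> q y1 = q y2 \<Longrightarrow> y1 = y2"
  using q_strict_antimono[of y1 y2] q_strict_antimono[of y2 y1]
  by (cases y1 y2 rule: linorder_cases) auto

lemma K_eq_zero_iff:
  assumes "y > 0"
  shows "K y = 0 \<longleftrightarrow> q y = 0"
proof -
  have "1 + y\<^sup>2 > 0" by (simp add: add_pos_nonneg)
  then show ?thesis using W_pos[OF assms] assms by (simp add: K_def Q_eq)
qed

lemma F_lipschitz:
  assumes "0 < c"
  shows "\<exists>L. L-lipschitz_on {c..d} F"
proof -
  define F' where "F' y = (2 * y * W y - (1 + y\<^sup>2) * W' y) / (W y)\<^sup>2" for y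
  have "(F has_real_derivative F' y) (at y)" if "y > 0" for y
  proof -
    have "((\<lambda>y. (1 + y\<^sup>2) / W y) has_real_derivative
        ((0 + 2 * y ^ 1 * 1) * W y - (1 + y\<^sup>2) * W' y) / (W y * W y)) (at y)"
      using W_pos[OF that] that by (intro derivative_eq_intros DERIV_W refl) (auto intro: DERIV_W)
    then show ?thesis
      unfolding F_def[abs_def] by (rule DERIV_cong) (simp add: F'_def power2_eq_square)
  qed
  moreover have "continuous_on {c..d} F'"
    unfolding F'_def using assms
    by (intro continuous_at_imp_continuous_on ballI continuous_intros isCont_W isCont_W')
      (auto simp: W_nonzero)
  ultimately show ?thesis
    using assms by (intro lipschitz_on_interval_if_continuous_deriv[of c d F F']) auto
qed

lemma K_lipschitz:
  assumes "0 < c"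
  shows "\<exists>L. L-lipschitz_on {c..d} K"
proof -
  define K' where "K' y = ((2 * y * Q y + (1 + y\<^sup>2) * (1 - (W' y)\<^sup>2 - W y * W'' y)) * W y
      - (1 + y\<^sup>2) * Q y * W' y) / (W y)\<^sup>2" for y
  have "(K has_real_derivative K' y) (at y)" if "y > 0" for y
  proof -
    have "((\<lambda>y. (1 + y\<^sup>2) * Q y / W y) has_real_derivative
        (((0 + 2 * y ^ 1 * 1) * Q y + (1 + y\<^sup>2) * (1 - (W' y)\<^sup>2 - W y * W'' y)) * W y
          - (1 + y\<^sup>2) * Q y * W' y) / (W y * W y)) (at y)"
      using W_pos[OF that] that
      by (intro derivative_eq_intros DERIV_W DERIV_Q refl) (auto intro: DERIV_W DERIV_Q)
    then show ?thesis
      unfolding K_def[abs_def] by (rule DERIV_cong) (simp add: K'_def power2_eq_square)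
  qed
  moreover have "continuous_on {c..d} K'"
    unfolding K'_def using assms
    by (intro continuous_at_imp_continuous_on ballI continuous_intros isCont_W isCont_W' isCont_W''
        isCont_Q) (auto simp: W_nonzero)
  ultimately show ?thesis
    using assms by (intro lipschitz_on_interval_if_continuous_deriv[of c d K K']) auto
qed

lemma jacobi_potential_identity:
  assumes y: "y > 0"
  shows "real (n - 1) * Q y / y + (1 - (W' y)\<^sup>2 - W y * W'' y)
    + ((W' y)\<^sup>2 + real (n - 1) * (W y / y)\<^sup>2 - real n) = 0"
proof -
  define m where "m = real (n - 1)"
  have n: "real n = m + 1" using n_ge_2 by (simp add: m_def)
  have W'': "W'' y = (m * W y - m * y * W' y) / y\<^sup>2"
    using W_ode[OF y] y by (simp add: m_def field_simps)
  show ?thesis unfolding m_def[symmetric] n W'' Q_def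
    using y by (simp add: field_simps power2_eq_square)
qed

end

section \<open>The Jacobi field \<open>a\<close>\<close>

locale hyperbolic_unduloid = delaunay_profile n \<mu> H
  for n :: nat and \<mu> H :: real +
  fixes \<phi> a :: "real \<Rightarrow> real"
  assumes smooth: "\<And>k t. (deriv ^^ k) \<phi> differentiable (at t)"
    and range: "\<And>t. 0 < \<phi> t \<and> \<phi> t < pi / 2"
    and ode: "\<And>t. \<mu> = tan (\<phi> t) ^ (n - 1) / (cos (\<phi> t) * sqrt (1 + (deriv \<phi> t)\<^sup>2))
                     - H * tan (\<phi> t) ^ n"
    and nonconst: "\<exists>s t. \<phi> s \<noteq> \<phi> t"
    and a_def: "\<And>t. a t = deriv \<phi> t / (cos (\<phi> t) * sqrt (1 + (deriv \<phi> t)\<^sup>2))"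
begin

definition T :: "real \<Rightarrow> real" where
  "T t = tan (\<phi> t)"

lemma differentiable_phi: "\<phi> differentiable (at t)"
  using smooth[of 0 t] by simp

lemma differentiable_phi': "deriv \<phi> differentiable (at t)"
  using smooth[of 1 t] by simp

lemma DERIV_phi: "(\<phi> has_real_derivative deriv \<phi> t) (at t)"
  using differentiable_phi by (simp add: DERIV_deriv_iff_real_differentiable)

lemma DERIV_phi': "(deriv \<phi> has_real_derivative deriv (deriv \<phi>) t) (at t)"
  using differentiable_phi' by (simp add: DERIV_deriv_iff_real_differentiable)

lemma isCont_phi'': "isCont (deriv (deriv \<phi>)) t"
  using smooth[of 2 t] by (simp add: numeral_2_eq_2 differentiable_imp_continuous_within)

lemma cos_phi_pos: "cos (\<phi> t) > 0"
  using range[of t] by (intro cos_gt_zero_pi) auto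

lemma sin_phi_pos: "sin (\<phi> t) > 0"
  using range[of t] by (intro sin_gt_zero) auto

lemma T_pos: "T t > 0"
  unfolding T_def tan_def using cos_phi_pos sin_phi_pos by simp

lemma T_eq_iff: "T s = T t \<longleftrightarrow> \<phi> s = \<phi> t"
proof
  assume "T s = T t"
  then have "arctan (tan (\<phi> s)) = arctan (tan (\<phi> t))" unfolding T_def by simp
  then show "\<phi> s = \<phi> t"
    using range[of s] range[of t] by (simp add: arctan_tan)
qed (simp add: T_def)

lemma one_plus_T_squared: "1 + (T t)\<^sup>2 = 1 / (cos (\<phi> t))\<^sup>2"
  using cos_phi_pos[of t] sin_cos_squared_add[of "\<phi> t"]
  unfolding T_def tan_def by (simp add: field_simps)

lemma W_T: "1 / (cos (\<phi> t) * sqrt (1 + (deriv \<phi> t)\<^sup>2)) = W (T t)"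
proof -
  define X y where "X = 1 / (cos (\<phi> t) * sqrt (1 + (deriv \<phi> t)\<^sup>2))" and "y = T t"
  have y: "y > 0" using T_pos by (simp add: y_def)
  have pow: "y ^ n = y ^ (n - 1) * y"
    using n_ge_2 by (simp add: power_Suc2[symmetric])
  have "\<mu> = y ^ (n - 1) * X - H * y ^ n"
    using ode[of t] unfolding X_def y_def T_def by simp
  then have "\<mu> = y ^ (n - 1) * (X - H * y)" unfolding pow by (simp add: algebra_simps)
  then have "X = \<mu> / y ^ (n - 1) + H * y" using y by (simp add: field_simps)
  then show ?thesis unfolding X_def y_def W_def .
qed

lemma sqrt_one_plus_deriv_phi_squared: "sqrt (1 + (deriv \<phi> t)\<^sup>2) = 1 / (cos (\<phi> t) * W (T t))"
proof -
  have "sqrt (1 + (deriv \<phi> t)\<^sup>2) > 0" by (simp add: add_pos_nonneg)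
  then show ?thesis
    using W_T[of t] cos_phi_pos[of t] W_pos[OF T_pos[of t]] by (simp add: field_simps)
qed

lemma a_eq: "a t = deriv \<phi> t * W (T t)"
  using a_def[of t] W_T[of t] by (simp add: divide_inverse)

lemma a_squared: "(a t)\<^sup>2 = 1 + (T t)\<^sup>2 - (W (T t))\<^sup>2"
proof -
  have "1 + (deriv \<phi> t)\<^sup>2 = (1 / (cos (\<phi> t) * W (T t)))\<^sup>2"
    by (simp flip: sqrt_one_plus_deriv_phi_squared add: add_nonneg_nonneg)
  then have "(deriv \<phi> t)\<^sup>2 = (1 + (T t)\<^sup>2) / (W (T t))\<^sup>2 - 1"
    unfolding one_plus_T_squared by (simp add: power_divide power_mult_distrib)
  then show ?thesis
    using W_pos[OF T_pos[of t]] unfolding a_eq power_mult_distrib by (simp add: field_simps)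
qed

lemma DERIV_T: "(T has_real_derivative F (T t) * a t) (at t)"
proof -
  have "((\<lambda>t. tan (\<phi> t)) has_real_derivative inverse ((cos (\<phi> t))\<^sup>2) * deriv \<phi> t) (at t)"
    using cos_phi_pos[of t] by (intro DERIV_chain2[OF DERIV_tan DERIV_phi]) simp
  moreover have "F (T t) * a t = inverse ((cos (\<phi> t))\<^sup>2) * deriv \<phi> t"
    using W_pos[OF T_pos[of t]]
    unfolding F_def a_eq one_plus_T_squared by (simp add: field_simps)
  ultimately show ?thesis unfolding T_def[abs_def] by simp
qed

lemma isCont_T: "isCont T t"
  using DERIV_T DERIV_isCont by blast

lemma DERIV_W_T: "((\<lambda>t. W (T t)) has_real_derivative W' (T t) * (F (T t) * a t)) (at t)"
  by (rule DERIV_chain2[OF DERIV_W[OF T_pos] DERIV_T])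

lemma DERIV_a:
  "(a has_real_derivative
      deriv (deriv \<phi>) t * W (T t) + (deriv \<phi> t)\<^sup>2 * (1 + (T t)\<^sup>2) * W' (T t)) (at t)"
proof -
  have Fa: "F (T t) * a t = (1 + (T t)\<^sup>2) * deriv \<phi> t"
    using W_pos[OF T_pos[of t]] unfolding F_def a_eq by simp
  have "((\<lambda>t. deriv \<phi> t * W (T t)) has_real_derivative
      deriv (deriv \<phi>) t * W (T t) + W' (T t) * (F (T t) * a t) * deriv \<phi> t) (at t)"
    by (rule derivative_eq_intros DERIV_phi' DERIV_W_T refl)+
  then have "((\<lambda>t. deriv \<phi> t * W (T t)) has_real_derivative
      deriv (deriv \<phi>) t * W (T t) + W' (T t) * ((1 + (T t)\<^sup>2) * deriv \<phi> t) * deriv \<phi> t) (at t)"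
    unfolding Fa .
  then show ?thesis
    unfolding a_eq[abs_def] by (rule DERIV_cong) (simp add: power2_eq_square)
qed

lemma DERIV_deriv_a: "(a has_real_derivative deriv a t) (at t)"
  using DERIV_a DERIV_imp_deriv by metis

lemma isCont_deriv_a: "isCont (deriv a) t"
proof -
  have "deriv a = (\<lambda>t. deriv (deriv \<phi>) t * W (T t) + (deriv \<phi> t)\<^sup>2 * (1 + (T t)\<^sup>2) * W' (T t))"
    using DERIV_a DERIV_imp_deriv by blast
  moreover have "isCont (\<lambda>t. W (T t)) t" "isCont (\<lambda>t. W' (T t)) t"
    using isCont_o2[OF isCont_T isCont_W[OF T_pos]] isCont_o2[OF isCont_T isCont_W'[OF T_pos]] .
  moreover have "isCont (deriv \<phi>) t"
    using DERIV_phi' by (rule DERIV_isCont)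
  ultimately show ?thesis
    by (simp only:) (intro continuous_intros isCont_phi'' isCont_T)
qed

lemma a_times_deriv_a_minus_K: "a t * (deriv a t - K (T t)) = 0"
proof -
  have "((\<lambda>t. (a t)\<^sup>2) has_real_derivative 2 * a t * deriv a t) (at t)"
    by (rule derivative_eq_intros DERIV_deriv_a refl)+ simp
  moreover have "((\<lambda>t. 1 + (T t)\<^sup>2 - (W (T t))\<^sup>2) has_real_derivative
      2 * T t * (F (T t) * a t) - 2 * W (T t) * (W' (T t) * (F (T t) * a t))) (at t)"
    by (rule derivative_eq_intros DERIV_T DERIV_W_T refl)+ simp
  moreover have "(\<lambda>t. (a t)\<^sup>2) = (\<lambda>t. 1 + (T t)\<^sup>2 - (W (T t))\<^sup>2)"
    using a_squared by auto
  ultimately have "2 * a t * deriv a t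
      = 2 * T t * (F (T t) * a t) - 2 * W (T t) * (W' (T t) * (F (T t) * a t))"
    using DERIV_unique by metis
  also have "\<dots> = 2 * a t * K (T t)"
    using W_nonzero[OF T_pos[of t]] unfolding F_def K_def Q_def by (simp add: field_simps)
  finally show ?thesis by (simp add: algebra_simps)
qed

lemma locally_constant_if_deriv_a_ne_K:
  assumes "deriv a t \<noteq> K (T t)"
  shows "\<exists>\<delta>>0. \<forall>s\<in>ball t \<delta>. a s = 0 \<and> deriv a s = 0 \<and> T s = T t"
proof -
  define U where "U = {s. deriv a s \<noteq> K (T s)}"
  have "isCont (\<lambda>s. K (T s)) s" for s
    using isCont_o2[OF isCont_T isCont_K[OF T_pos]] .
  then have "open U"
    unfolding U_def by (intro open_Collect_neq continuous_at_imp_continuous_on ballI isCont_deriv_a)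
  then obtain \<delta> where \<delta>: "\<delta> > 0" "ball t \<delta> \<subseteq> U"
    using assms unfolding U_def open_contains_ball by blast
  have a_U: "a s = 0" if "s \<in> U" for s
    using a_times_deriv_a_minus_K[of s] that unfolding U_def by simp
  have deriv_a_U: "deriv a s = 0" if "s \<in> U" for s
  proof -
    have "((\<lambda>_. 0) has_real_derivative 0) (at s)" by simp
    then have "(a has_real_derivative 0) (at s)"
      by (rule has_field_derivative_transform_within_open[OF _ \<open>open U\<close> that]) (simp add: a_U)
    then show ?thesis using DERIV_deriv_a DERIV_unique by blast
  qed
  have T_U: "T s = T t" if "s \<in> ball t \<delta>" for s
  proof (rule DERIV_isconst3[of "t - \<delta>" "t + \<delta>" s t T])
    fix x assume "x \<in> {t - \<delta><..<t + \<delta>}"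
    then have "x \<in> U" using \<delta>(2) by (auto simp: dist_real_def)
    then show "(T has_real_derivative 0) (at x)" using DERIV_T[of x] a_U by simp
  qed (use \<delta>(1) that in \<open>auto simp: dist_real_def\<close>)
  have "a s = 0 \<and> deriv a s = 0 \<and> T s = T t" if "s \<in> ball t \<delta>" for s
    using that \<delta>(2) a_U deriv_a_U T_U by blast
  then show ?thesis using \<delta>(1) by blast
qed

lemma deriv_a_eq_K: "deriv a t = K (T t)"
proof (rule ccontr)
  assume ne: "deriv a t \<noteq> K (T t)"
  then obtain \<delta> where "\<delta> > 0" "\<forall>s\<in>ball t \<delta>. a s = 0 \<and> deriv a s = 0 \<and> T s = T t"
    using locally_constant_if_deriv_a_ne_K[OF ne] by blast
  then have "deriv a t = 0" by simp
  with ne have K_ne: "K (T t) \<noteq> 0" by simp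
  define P where "P = {s. T s = T t} \<inter> {s. a s = 0} \<inter> {s. deriv a s = 0}"
  have "continuous_on UNIV T" "continuous_on UNIV a" "continuous_on UNIV (deriv a)"
    by (intro continuous_at_imp_continuous_on ballI isCont_T isCont_deriv_a
        DERIV_isCont[OF DERIV_deriv_a])+
  then have "closed P"
    unfolding P_def by (intro closed_Int closed_Collect_eq continuous_on_const)
  moreover have "open P"
    unfolding open_contains_ball
  proof
    fix s assume "s \<in> P"
    then have "deriv a s \<noteq> K (T s)" using K_ne unfolding P_def by simp
    then obtain \<delta> where \<delta>: "\<delta> > 0" "\<forall>r\<in>ball s \<delta>. a r = 0 \<and> deriv a r = 0 \<and> T r = T s"
      using locally_constant_if_deriv_a_ne_K[of s] by blast
    have "T s = T t" using \<open>s \<in> P\<close> by (simp add: P_def)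
    then have "ball s \<delta> \<subseteq> P" using \<delta>(2) by (auto simp: P_def)
    then show "\<exists>\<delta>>0. ball s \<delta> \<subseteq> P" using \<delta>(1) by blast
  qed
  moreover have "t \<in> P"
    using ne \<open>deriv a t = 0\<close> a_times_deriv_a_minus_K[of t] unfolding P_def by simp
  ultimately have "P = UNIV" using clopen[of P] by auto
  then have "\<phi> s = \<phi> t" for s unfolding P_def by (auto simp flip: T_eq_iff)
  then show False using nonconst by metis
qed

lemma DERIV_a_K: "(a has_real_derivative K (T t)) (at t)"
  using DERIV_deriv_a deriv_a_eq_K by simp

lemma phi_eq_if_deriv_a_eq_0:
  assumes "deriv a s = 0" "deriv a t = 0"
  shows "\<phi> s = \<phi> t"
proof -
  have "q (T s) = 0" "q (T t) = 0"
    using assms deriv_a_eq_K K_eq_zero_iff T_pos by auto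
  then show ?thesis using q_inj T_pos T_eq_iff by metis
qed

lemma metA_T: "metA \<phi> t = F (T t)"
proof -
  have "metA \<phi> t = sqrt (1 + (deriv \<phi> t)\<^sup>2) / cos (\<phi> t)"
    by (rule metA_eq[OF differentiable_phi differentiable_phi'])
  also have "\<dots> = (1 / (cos (\<phi> t))\<^sup>2) / W (T t)"
    unfolding sqrt_one_plus_deriv_phi_squared by (simp add: power2_eq_square)
  finally show ?thesis unfolding F_def one_plus_T_squared .
qed

lemma metB_T: "metB \<phi> t = T t"
  unfolding metB_def prof_r_def prof_y_def T_def tan_def by simp

lemma hyp_kappa_p_T: "hyp_kappa_p \<phi> t = W (T t) / T t"
  using hyp_kappa_p_eq[OF differentiable_phi differentiable_phi', of t]
    sin_phi_pos[of t] cos_phi_pos[of t]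
  unfolding sqrt_one_plus_deriv_phi_squared T_def tan_def by (simp add: field_simps)

lemma deriv2_phi_eq:
  "deriv (deriv \<phi>) t = (K (T t) - (deriv \<phi> t)\<^sup>2 * (1 + (T t)\<^sup>2) * W' (T t)) / W (T t)"
proof -
  have "deriv (deriv \<phi>) t * W (T t) + (deriv \<phi> t)\<^sup>2 * (1 + (T t)\<^sup>2) * W' (T t) = K (T t)"
    using DERIV_unique[OF DERIV_a DERIV_a_K] .
  then show ?thesis using W_nonzero[OF T_pos[of t]] by (simp add: field_simps)
qed

lemma hyp_kappa_m_T: "hyp_kappa_m \<phi> t = W' (T t)"
proof -
  define \<sigma> where "\<sigma> = sqrt (1 + (deriv \<phi> t)\<^sup>2)"
  have \<sigma>2: "\<sigma>\<^sup>2 = 1 + (deriv \<phi> t)\<^sup>2" unfolding \<sigma>_def by (simp add: add_nonneg_nonneg)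
  have curvature_algebra: "(s * \<sigma>\<^sup>2 - c * q) / \<sigma> ^ 3 = w'"
    if "c > 0" "w > 0" "\<sigma> = 1 / (c * w)" "s = y * c" "u = 1 / c\<^sup>2"
      "k = u * (y - w * w') / w" "q = (k - (\<sigma>\<^sup>2 - 1) * u * w') / w"
    for c w \<sigma> s y u k q w' :: real
    using that(1,2) unfolding that(3-7) by (simp add: field_simps power2_eq_square power3_eq_cube)
  have "hyp_kappa_m \<phi> t = (sin (\<phi> t) * \<sigma>\<^sup>2 - cos (\<phi> t) * deriv (deriv \<phi>) t) / \<sigma> ^ 3"
    unfolding \<sigma>2 unfolding \<sigma>_def by (rule hyp_kappa_m_eq[OF differentiable_phi differentiable_phi'])
  also have "\<dots> = W' (T t)"
  proof (rule curvature_algebra)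
    show "\<sigma> = 1 / (cos (\<phi> t) * W (T t))"
      unfolding \<sigma>_def by (rule sqrt_one_plus_deriv_phi_squared)
    show "sin (\<phi> t) = T t * cos (\<phi> t)"
      using cos_phi_pos[of t] unfolding T_def tan_def by simp
    show "deriv (deriv \<phi>) t
        = (K (T t) - (\<sigma>\<^sup>2 - 1) * (1 + (T t)\<^sup>2) * W' (T t)) / W (T t)"
      unfolding \<sigma>2 deriv2_phi_eq by simp
  qed (use cos_phi_pos W_pos[OF T_pos] one_plus_T_squared in \<open>simp_all add: K_def Q_def\<close>)
  finally show ?thesis .
qed

lemma lap_rot_a:
  "lap_rot n \<phi> a t
    = - (real (n - 1) * Q (T t) / T t + (1 - (W' (T t))\<^sup>2 - W (T t) * W'' (T t))) * a t"
proof -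
  define \<Psi> where "\<Psi> y = y ^ (n - 1) * Q y" for y
  have inner: "(\<lambda>s. metB \<phi> s ^ (n - 1) / metA \<phi> s * deriv a s) = (\<lambda>s. \<Psi> (T s))"
  proof
    fix s
    have cancel: "x / (u / w) * (u * p / w) = x * p" if "u \<noteq> 0" "w \<noteq> 0" for x u w p :: real
      using that by simp
    have "1 + (T s)\<^sup>2 \<noteq> 0" using zero_le_power2[of "T s"] by linarith
    then show "metB \<phi> s ^ (n - 1) / metA \<phi> s * deriv a s = \<Psi> (T s)"
      unfolding metB_T metA_T deriv_a_eq_K F_def K_def \<Psi>_def
      using cancel W_nonzero[OF T_pos[of s]] by simp
  qed
  have "(\<Psi> has_real_derivative y ^ (n - 1) * (1 - (W' y)\<^sup>2 - W y * W'' y)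
      + real (n - 1) * y ^ (n - 1 - Suc 0) * Q y) (at y)" if "y > 0" for y
    unfolding \<Psi>_def[abs_def] by (rule DERIV_mult'[OF DERIV_pow DERIV_Q[OF that]])
  from DERIV_chain2[OF this[OF T_pos] DERIV_T]
  have chain: "deriv (\<lambda>s. \<Psi> (T s)) t
      = (T t ^ (n - 1) * (1 - (W' (T t))\<^sup>2 - W (T t) * W'' (T t))
          + real (n - 1) * T t ^ (n - 1 - Suc 0) * Q (T t)) * (F (T t) * a t)"
    by (rule DERIV_imp_deriv)
  have pow: "y ^ (n - 1) = y ^ (n - 1 - Suc 0) * y" for y :: real
    by (rule n_Suc_Suc) (simp add: algebra_simps)
  have cancel:
    "- (1 / (f * (p * y))) * ((p * y * Q' + m * p * Q) * (f * a)) = - (m * Q / y + Q') * a"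
    if "f > 0" "p > 0" "y > 0" for f p y Q Q' m a :: real
    using that by (simp add: field_simps)
  have "F (T t) > 0"
    using W_pos[OF T_pos[of t]] by (simp add: F_def add_pos_nonneg)
  then show ?thesis
    unfolding lap_rot_def inner unfolding metA_T metB_T chain unfolding pow
    by (rule cancel) (simp_all add: T_pos)
qed

lemma potV_T: "potV n \<phi> t = (W' (T t))\<^sup>2 + real (n - 1) * (W (T t) / T t)\<^sup>2 - real n"
  unfolding potV_def sff_sq_def hyp_kappa_m_T hyp_kappa_p_T ..

theorem jacobi_equation: "lap_rot n \<phi> a t - potV n \<phi> t * a t = 0"
proof -
  have "lap_rot n \<phi> a t - potV n \<phi> t * a t
      = - (real (n - 1) * Q (T t) / T t + (1 - (W' (T t))\<^sup>2 - W (T t) * W'' (T t))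
           + ((W' (T t))\<^sup>2 + real (n - 1) * (W (T t) / T t)\<^sup>2 - real n)) * a t"
    unfolding lap_rot_a potV_T by (simp add: algebra_simps)
  then show ?thesis unfolding jacobi_potential_identity[OF T_pos] by simp
qed

end

section \<open>Zeros of \<open>a\<close> and of its derivative\<close>

lemma inj_on_if_deriv_nonzero:
  fixes g g' :: "real \<Rightarrow> real"
  assumes deriv: "\<And>x. (g has_real_derivative g' x) (at x)"
    and nonzero: "\<And>x. l < x \<Longrightarrow> x < h \<Longrightarrow> g' x \<noteq> 0"
  shows "inj_on g {l..h}"
proof (rule linorder_inj_onI)
  fix s t assume "s < t" "s \<in> {l..h}" "t \<in> {l..h}"
  then obtain z where "s < z" "z < t" "g t - g s = (t - s) * g' z"
    using MVT2[of s t g g'] deriv by blast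
  then show "g s \<noteq> g t" using nonzero[of z] \<open>s \<in> {l..h}\<close> \<open>t \<in> {l..h}\<close> by auto
qed auto

locale periodic_hyperbolic_unduloid = hyperbolic_unduloid +
  fixes \<tau> :: real
  assumes min0: "\<And>t. \<phi> 0 \<le> \<phi> t"
    and tau_pos: "\<tau> > 0"
    and periodic: "\<And>t. \<phi> (t + \<tau>) = \<phi> t"
    and tau_min: "\<And>T. 0 < T \<Longrightarrow> T < \<tau> \<Longrightarrow> \<exists>t. \<phi> (t + T) \<noteq> \<phi> t"
begin

lemma T_periodic: "T (t + \<tau>) = T t"
  by (simp add: T_def periodic)

lemma a_periodic: "a (t + \<tau>) = a t"
  by (simp add: a_def periodic deriv_shift_periodic[of \<phi>, OF periodic])

lemma T_ge_T_0: "T 0 \<le> T t"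
  unfolding T_def using min0[of t] range[of 0] range[of t] by (intro tan_mono_le) auto

lemma T_bounded: obtains M where "\<And>t. T t \<in> {T 0..M}"
proof -
  have "bounded (range T)"
    using isCont_T tau_pos T_periodic by (rule bounded_range_if_continuous_periodic)
  then obtain M where "\<And>t. \<bar>T t\<bar> \<le> M" by (auto simp: bounded_real)
  then have "T t \<in> {T 0..M}" for t using T_ge_T_0[of t] abs_le_D1 by auto
  then show ?thesis by (rule that)
qed

lemma a_bounded: obtains C where "\<And>t. \<bar>a t\<bar> \<le> C"
proof -
  have "bounded (range a)"
    using DERIV_isCont[OF DERIV_deriv_a] tau_pos a_periodic by (rule bounded_range_if_continuous_periodic)
  then obtain C where "\<And>t. \<bar>a t\<bar> \<le> C" by (auto simp: bounded_real)
  then show ?thesis by (rule that)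
qed

lemma reflection:
  assumes "a t0 = 0"
  shows "T (2 * t0 - t) = T t \<and> a (2 * t0 - t) = - a t"
proof -
  obtain M where range_T: "\<And>t. T t \<in> {T 0..M}" using T_bounded by metis
  obtain C where bound_a: "\<And>t. \<bar>a t\<bar> \<le> C" using a_bounded by metis
  obtain Lf where F_lip: "Lf-lipschitz_on {T 0..M} F" using F_lipschitz[OF T_pos] by blast
  obtain Lk where K_lip: "Lk-lipschitz_on {T 0..M} K" using K_lipschitz[OF T_pos] by blast
  have F_bound: "\<bar>F z\<bar> \<le> \<bar>F (T 0)\<bar> + Lf * (M - T 0)" if "z \<in> {T 0..M}" for z
  proof -
    have "\<bar>F z - F (T 0)\<bar> \<le> Lf * \<bar>z - T 0\<bar>"
      using lipschitz_onD[OF F_lip that range_T[of 0]] by (simp add: dist_real_def)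
    also have "\<dots> \<le> Lf * (M - T 0)"
      using that lipschitz_on_nonneg[OF F_lip] by (intro mult_left_mono) auto
    finally show ?thesis by linarith
  qed
  have reflect: "((\<lambda>t. 2 * t0 - t) has_real_derivative -1) (at t)" for t
    using DERIV_diff[OF DERIV_const DERIV_ident] by simp
  have dy: "((\<lambda>t. T (2 * t0 - t)) has_real_derivative
      F (T (2 * t0 - t)) * - a (2 * t0 - t)) (at t)" for t
    using DERIV_chain2[OF DERIV_T reflect] by simp
  have dv: "((\<lambda>t. - a (2 * t0 - t)) has_real_derivative K (T (2 * t0 - t))) (at t)" for t
    using DERIV_minus[OF DERIV_chain2[OF DERIV_a_K reflect]] by simp
  have bound_v: "\<bar>- a (2 * t0 - t)\<bar> \<le> C" for t
    using bound_a by simp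
  have "T t = T (2 * t0 - t) \<and> a t = - a (2 * t0 - t)"
    using ode_system_unique[OF DERIV_T DERIV_a_K dy dv range_T range_T F_lip K_lip F_bound bound_v,
        of t0 t] assms by simp
  then show ?thesis by simp
qed

lemma a_0: "a 0 = 0"
proof -
  have "deriv \<phi> 0 = 0"
    by (rule DERIV_local_min[OF DERIV_phi, of 1]) (use min0 in auto)
  then show ?thesis by (simp add: a_eq)
qed

lemma a_eq_zero_iff: "a t = 0 \<longleftrightarrow> (\<exists>k::int. t = of_int k * \<tau> / 2)"
proof
  assume "a t = 0"
  have "\<phi> (s + 2 * t) = \<phi> s" for s
  proof -
    have "T (s + 2 * t) = T (- s)"
      using reflection[OF \<open>a t = 0\<close>, of "- s"] by (simp add: algebra_simps)
    also have "\<dots> = T s"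
      using reflection[OF a_0, of s] by simp
    finally show ?thesis by (simp add: T_eq_iff)
  qed
  then obtain k :: int where "2 * t = of_int k * \<tau>"
    using period_multiple_of_minimal_period[OF tau_pos periodic tau_min] by blast
  then show "\<exists>k::int. t = of_int k * \<tau> / 2" by (intro exI[of _ k]) simp
next
  assume "\<exists>k::int. t = of_int k * \<tau> / 2"
  then obtain k :: int where t: "t = of_int k * \<tau> / 2" by blast
  interpret periodic_fun_simple a \<tau> by unfold_locales (rule a_periodic)
  have "a t = a (- t)"
    using plus_of_int[of "- t" k] by (simp add: t mult.commute)
  also have "\<dots> = - a t"
    using reflection[OF a_0, of t] by simp
  finally show "a t = 0" by simp
qed

lemma phi_inj_on_half_period:
  assumes "k \<in> {0, 1}"
  shows "inj_on \<phi> {k * \<tau> / 2..(k + 1) * \<tau> / 2}"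
proof (rule inj_on_if_deriv_nonzero[OF DERIV_phi])
  fix x assume x: "k * \<tau> / 2 < x" "x < (k + 1) * \<tau> / 2"
  have "a x \<noteq> 0"
  proof
    assume "a x = 0"
    then obtain j :: int where "x = of_int j * \<tau> / 2" using a_eq_zero_iff by blast
    with x have "k * \<tau> < of_int j * \<tau>" "of_int j * \<tau> < (k + 1) * \<tau>"
      by simp_all
    then have "k < of_int j" "of_int j < k + 1"
      using tau_pos by (simp_all add: mult_less_cancel_right_pos)
    with assms show False by auto
  qed
  then show "deriv \<phi> x \<noteq> 0" by (simp add: a_eq)
qed

lemma deriv_a_zeros:
  "\<exists>\<zeta>1 \<zeta>2. 0 < \<zeta>1 \<and> \<zeta>1 < \<tau> / 2 \<and> \<tau> / 2 < \<zeta>2 \<and> \<zeta>2 < \<tau>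
      \<and> {t \<in> {0..\<tau>}. deriv a t = 0} = {\<zeta>1, \<zeta>2}"
proof -
  have "a (of_int k * \<tau> / 2) = 0" for k :: int using a_eq_zero_iff by blast
  from this[of 0] this[of 1] this[of 2]
  have zeros: "a 0 = 0" "a (\<tau> / 2) = 0" "a \<tau> = 0" by simp_all
  obtain \<zeta>1 where \<zeta>1: "0 < \<zeta>1" "\<zeta>1 < \<tau> / 2" "a (\<tau> / 2) - a 0 = (\<tau> / 2 - 0) * deriv a \<zeta>1"
    using MVT2[of 0 "\<tau> / 2" a "deriv a"] tau_pos DERIV_deriv_a by auto
  obtain \<zeta>2 where \<zeta>2: "\<tau> / 2 < \<zeta>2" "\<zeta>2 < \<tau>" "a \<tau> - a (\<tau> / 2) = (\<tau> - \<tau> / 2) * deriv a \<zeta>2"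
    using MVT2[of "\<tau> / 2" \<tau> a "deriv a"] tau_pos DERIV_deriv_a by auto
  have crit: "deriv a \<zeta>1 = 0" "deriv a \<zeta>2 = 0"
    using \<zeta>1(3) \<zeta>2(3) zeros tau_pos by simp_all
  have "t \<in> {\<zeta>1, \<zeta>2}" if "t \<in> {0..\<tau>}" "deriv a t = 0" for t
  proof (cases "t \<le> \<tau> / 2")
    case True
    then have "t = \<zeta>1"
      using phi_inj_on_half_period[of 0] phi_eq_if_deriv_a_eq_0[OF that(2) crit(1)] that(1) \<zeta>1
      by (auto dest: inj_onD)
    then show ?thesis by simp
  next
    case False
    then have "t = \<zeta>2"
      using phi_inj_on_half_period[of 1] phi_eq_if_deriv_a_eq_0[OF that(2) crit(2)] that(1) \<zeta>2
      by (auto dest: inj_onD)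
    then show ?thesis by simp
  qed
  then have "{t \<in> {0..\<tau>}. deriv a t = 0} = {\<zeta>1, \<zeta>2}"
    using crit \<zeta>1 \<zeta>2 by auto
  then show ?thesis using \<zeta>1 \<zeta>2 by blast
qed

end

theorem lemma3p5:
  fixes n :: nat and H \<mu> \<tau> :: real and \<phi> a :: "real \<Rightarrow> real"
  assumes n2: "n \<ge> 2" and H1: "H > 1" and mu: "\<mu> > 0"
    and smooth: "\<And>k t. (deriv ^^ k) \<phi> differentiable (at t)"
    and range: "\<And>t. 0 < \<phi> t \<and> \<phi> t < pi / 2"
    and ode: "\<And>t. \<mu> = tan (\<phi> t) ^ (n - 1) / (cos (\<phi> t) * sqrt (1 + (deriv \<phi> t)\<^sup>2))
                     - H * tan (\<phi> t) ^ n"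
    and nonconst: "\<exists>s t. \<phi> s \<noteq> \<phi> t"
    and min0: "\<And>t. \<phi> 0 \<le> \<phi> t"
    and tau_pos: "\<tau> > 0"
    and periodic: "\<And>t. \<phi> (t + \<tau>) = \<phi> t"
    and tau_min: "\<And>T. 0 < T \<Longrightarrow> T < \<tau> \<Longrightarrow> \<exists>t. \<phi> (t + T) \<noteq> \<phi> t"
    and a_def: "\<And>t. a t = deriv \<phi> t / (cos (\<phi> t) * sqrt (1 + (deriv \<phi> t)\<^sup>2))"
  shows "(\<forall>t. lap_rot n \<phi> a t - potV n \<phi> t * a t = 0)
       \<and> (\<forall>t. a t = 0 \<longleftrightarrow> (\<exists>k::int. t = real_of_int k * \<tau> / 2))
       \<and> (\<exists>\<zeta>1 \<zeta>2. 0 < \<zeta>1 \<and> \<zeta>1 < \<tau> / 2 \<and> \<tau> / 2 < \<zeta>2 \<and> \<zeta>2 < \<tau>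
             \<and> {t \<in> {0..\<tau>}. deriv a t = 0} = {\<zeta>1, \<zeta>2})"
proof -
  interpret periodic_hyperbolic_unduloid n \<mu> H \<phi> a \<tau>
    by (unfold_locales; (fact assms)?) (use H1 in simp)
  show ?thesis using jacobi_equation a_eq_zero_iff deriv_a_zeros by blast
qed

end
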